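(* Let $(\Omega,\mathcal{F},P)$ be a probability space with a filtration $\mathbb{F}=(\mathcal{F}_t)_{t\in[0,T]}$ satisfying the usual conditions, and let $S=(S_t)_{t\in[0,T]}$ be a c\`adl\`ag $\mathbb{R}^d$-valued process adapted to $\mathbb{F}$. Then $S$ is sticky with respect to $\mathbb{F}$ if and only if for every deterministic $t\in[0,T]$ and every strictly positive $\mathcal{F}_t$-measurable random variable $\kappa$, $$P\Big(\sup_{u\in[t,T]}|S_u-S_t|<\kappa\,\Big|\,\mathcal{F}_t\Big)>0\quad\text{a.s.}$$
   Context: The usual conditions mean that $\mathbb{F}$ is right-continuous and $\mathcal{F}_0$ contains all $P$-null sets of $\mathcal{F}$ ($\mathcal{F}_0$ need not be trivial). $|\cdot|$ is the Euclidean norm. A process $S$ is called sticky with respect to $\mathbb{F}$ if for every $\mathbb{F}$-stopping time $\tau$ (with values in $[0,T]$) and every strictly positive $\mathcal{F}_\tau$-measurable random variable $\kappa$, $P(\sup_{u\in[\tau,T]}|S_u-S_\tau|<\kappa\mid\mathcal{F}_\tau)>0$ a.s. *)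

theory Defs
  imports "HOL-Probability.Probability"
begin

definition usual_filtration :: "'a measure \<Rightarrow> (real \<Rightarrow> 'a measure) \<Rightarrow> real \<Rightarrow> bool" where
  "usual_filtration M F T \<longleftrightarrow>
     (\<forall>t\<in>{0..T}. subalgebra M (F t)) \<and>
     (\<forall>s\<in>{0..T}. \<forall>t\<in>{0..T}. s \<le> t \<longrightarrow> sets (F s) \<subseteq> sets (F t)) \<and>
     (\<forall>t\<in>{0..<T}. sets (F t) = (\<Inter>s\<in>{t<..T}. sets (F s))) \<and>
     null_sets M \<subseteq> sets (F 0)"

definition cadlag_on :: "'a measure \<Rightarrow> real \<Rightarrow> (real \<Rightarrow> 'a \<Rightarrow> 'd::euclidean_space) \<Rightarrow> bool" where
  "cadlag_on M T S \<longleftrightarrow>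
     (\<forall>\<omega>\<in>space M.
        (\<forall>t\<in>{0..<T}. continuous (at_right t) (\<lambda>u. S u \<omega>)) \<and>
        (\<forall>t\<in>{0<..T}. \<exists>l. ((\<lambda>u. S u \<omega>) \<longlongrightarrow> l) (at_left t)))"

definition adapted_on :: "(real \<Rightarrow> 'a measure) \<Rightarrow> real \<Rightarrow> (real \<Rightarrow> 'a \<Rightarrow> 'd::euclidean_space) \<Rightarrow> bool" where
  "adapted_on F T S \<longleftrightarrow> (\<forall>t\<in>{0..T}. S t \<in> borel_measurable (F t))"

definition stopping_time_on :: "'a measure \<Rightarrow> (real \<Rightarrow> 'a measure) \<Rightarrow> real \<Rightarrow> ('a \<Rightarrow> real) \<Rightarrow> bool" where
  "stopping_time_on M F T \<tau> \<longleftrightarrow>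
     (\<forall>\<omega>\<in>space M. \<tau> \<omega> \<in> {0..T}) \<and>
     (\<forall>t\<in>{0..T}. {\<omega>\<in>space M. \<tau> \<omega> \<le> t} \<in> sets (F t))"

definition stopped_sigma :: "'a measure \<Rightarrow> (real \<Rightarrow> 'a measure) \<Rightarrow> real \<Rightarrow> ('a \<Rightarrow> real) \<Rightarrow> 'a measure" where
  "stopped_sigma M F T \<tau> = sigma (space M)
     {A \<in> sets M. \<forall>t\<in>{0..T}. A \<inter> {\<omega>\<in>space M. \<tau> \<omega> \<le> t} \<in> sets (F t)}"

definition condP :: "'a measure \<Rightarrow> 'a measure \<Rightarrow> 'a set \<Rightarrow> 'a \<Rightarrow> real" where
  "condP M G A = real_cond_exp M G (indicator A)"

definition small_osc_event :: "'a measure \<Rightarrow> real \<Rightarrow> (real \<Rightarrow> 'a \<Rightarrow> 'd::euclidean_space)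
    \<Rightarrow> ('a \<Rightarrow> real) \<Rightarrow> ('a \<Rightarrow> real) \<Rightarrow> 'a set" where
  "small_osc_event M T S \<tau> \<kappa> =
     {\<omega>\<in>space M. (SUP u\<in>{\<tau> \<omega>..T}. norm (S u \<omega> - S (\<tau> \<omega>) \<omega>)) < \<kappa> \<omega>}"

definition sticky :: "'a measure \<Rightarrow> (real \<Rightarrow> 'a measure) \<Rightarrow> real \<Rightarrow> (real \<Rightarrow> 'a \<Rightarrow> 'd::euclidean_space) \<Rightarrow> bool" where
  "sticky M F T S \<longleftrightarrow>
     (\<forall>\<tau> \<kappa>. stopping_time_on M F T \<tau> \<and> \<kappa> \<in> borel_measurable (stopped_sigma M F T \<tau>) \<and>
        (\<forall>\<omega>\<in>space M. 0 < \<kappa> \<omega>) \<longrightarrow>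
        (AE \<omega> in M. 0 < condP M (stopped_sigma M F T \<tau>) (small_osc_event M T S \<tau> \<kappa>) \<omega>))"

end

theory Submission
  imports Defs
begin

text \<open>
  Necessity is the case of constant stopping times, for which the stopped sigma-algebra
  is F t itself. For sufficiency, fix a stopping time tau, a positive F_tau-measurable
  kappa and, since P(B | G) > 0 a.s. iff B meets every G-event of positive probability
  in positive probability, an event A in F_tau with P(A) > 0. By right-continuity each
  path settles after tau: for some q in the countable set (Q \<inter> [0,T]) \<union> {T} with
  tau \<le> q, the path at rational times in [tau, q] stays within kappa/4 of S q. These
  events intersected with A are F_q-measurable and cover A, so one of them, D, has
  positive probability. The hypothesis at time q with threshold kappa/4 then makes
  D \<inter> {sup over [q,T] of |S u - S q| < kappa/4} non-null, and on this event the
  oscillation of S after tau is at most kappa/2 < kappa.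
\<close>

section \<open>Conditional probabilities\<close>

lemma set_integral_pos_of_AE_pos:
  fixes f :: "'a \<Rightarrow> real"
  assumes f: "integrable M f" and pos: "AE x in M. 0 < f x"
    and A: "A \<in> sets M" and "0 < measure M A"
  shows "0 < (\<integral>x\<in>A. f x \<partial>M)"
proof (rule ccontr)
  have nonneg: "AE x in M. 0 \<le> indicator A x * f x"
    using pos by eventually_elim (simp add: indicator_def)
  assume "\<not> 0 < (\<integral>x\<in>A. f x \<partial>M)"
  moreover have "0 \<le> (\<integral>x\<in>A. f x \<partial>M)"
    unfolding set_lebesgue_integral_def using nonneg by (simp add: integral_nonneg_AE)
  ultimately have "(\<integral>x. indicator A x * f x \<partial>M) = 0"
    unfolding set_lebesgue_integral_def by simp
  then have "AE x in M. indicator A x * f x = 0"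
    using integral_nonneg_eq_0_iff_AE[OF integrable_mult_indicator[OF A f]] nonneg by simp
  with pos have "AE x in M. x \<notin> A"
    by eventually_elim (auto simp: indicator_def)
  then have "A \<in> null_sets M"
    using AE_iff_null_sets[OF A] by simp
  then show False
    using \<open>0 < measure M A\<close> by (simp add: measure_def null_sets_def)
qed

lemma measure_Int_eq_set_integral_condP:
  assumes "prob_space M" "subalgebra M G" "B \<in> sets M" "A \<in> sets G"
  shows "measure M (A \<inter> B) = (\<integral>x\<in>A. condP M G B x \<partial>M)"
proof -
  interpret prob_space M by fact
  interpret finite_measure_subalgebra M G by unfold_locales fact
  have "A \<in> sets M" using assms(2,4) by (auto simp: subalgebra_def)
  have "(\<integral>x\<in>A. condP M G B x \<partial>M) = (\<integral>x\<in>A. indicator B x \<partial>M)"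
    unfolding condP_def using assms(3,4)
    by (intro real_cond_exp_intA[symmetric] integrable_real_indicator) (auto simp: emeasure_eq_measure)
  also have "\<dots> = measure M (A \<inter> B)"
    using \<open>A \<in> sets M\<close> assms(3) unfolding set_lebesgue_integral_def by (simp add: indicator_inter_arith[symmetric])
  finally show ?thesis ..
qed

lemma AE_condP_pos_iff:
  assumes P: "prob_space M" and G: "subalgebra M G" and B: "B \<in> sets M"
  shows "(AE \<omega> in M. 0 < condP M G B \<omega>) \<longleftrightarrow>
    (\<forall>A\<in>sets G. 0 < measure M A \<longrightarrow> 0 < measure M (A \<inter> B))"
proof
  interpret prob_space M by fact
  interpret finite_measure_subalgebra M G by unfold_locales fact
  have int: "integrable M (condP M G B)"
    unfolding condP_def using B
    by (intro real_cond_exp_int(1) integrable_real_indicator) (auto simp: emeasure_eq_measure)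
  show "\<forall>A\<in>sets G. 0 < measure M A \<longrightarrow> 0 < measure M (A \<inter> B)"
    if "AE \<omega> in M. 0 < condP M G B \<omega>"
    using set_integral_pos_of_AE_pos[OF int that] measure_Int_eq_set_integral_condP[OF P G B]
      G by (auto simp: subalgebra_def)
next
  interpret prob_space M by fact
  assume H: "\<forall>A\<in>sets G. 0 < measure M A \<longrightarrow> 0 < measure M (A \<inter> B)"
  define A where "A = {x\<in>space M. condP M G B x \<le> 0}"
  have "condP M G B \<in> borel_measurable G"
    unfolding condP_def by simp
  then have "{x\<in>space G. condP M G B x \<le> 0} \<in> sets G"
    by measurable
  then have "A \<in> sets G"
    using G by (simp add: A_def subalgebra_def)
  have "0 \<le> (\<integral>x. - (indicator A x * condP M G B x) \<partial>M)"
    by (intro integral_nonneg_AE AE_I2) (auto simp: A_def indicator_def)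
  then have "(\<integral>x\<in>A. condP M G B x \<partial>M) \<le> 0"
    unfolding set_lebesgue_integral_def by simp
  then have "\<not> 0 < measure M (A \<inter> B)"
    using measure_Int_eq_set_integral_condP[OF P G B \<open>A \<in> sets G\<close>] by simp
  then have "\<not> 0 < measure M A"
    using H \<open>A \<in> sets G\<close> by blast
  then have "measure M A = 0"
    using measure_nonneg[of M A] by linarith
  moreover have "A \<in> sets M" using \<open>A \<in> sets G\<close> G by (auto simp: subalgebra_def)
  ultimately show "AE \<omega> in M. 0 < condP M G B \<omega>"
    using AE_iff_measurable[OF \<open>A \<in> sets M\<close>] by (auto simp: A_def emeasure_eq_measure not_less)
qed

lemma condP_cong_sets:
  assumes "space G = space G'" "sets G = sets G'"
  shows "condP M G B = condP M G' B"
proof -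
  have "subalgebra M G = subalgebra M G'" "restr_to_subalg N G = restr_to_subalg N G'" for N
    unfolding subalgebra_def restr_to_subalg_def using assms by simp_all
  then show ?thesis
    unfolding condP_def real_cond_exp_def nn_cond_exp_def by simp
qed

lemma (in finite_measure) measure_pos_of_countable_cover:
  assumes "countable I" "A \<in> sets M" "0 < measure M A"
    and cover: "A \<subseteq> (\<Union>i\<in>I. D i)" and D: "\<And>i. i \<in> I \<Longrightarrow> D i \<in> sets M"
  shows "\<exists>i\<in>I. 0 < measure M (D i)"
proof (rule ccontr)
  assume none: "\<not> (\<exists>i\<in>I. 0 < measure M (D i))"
  have "D i \<in> null_sets M" if "i \<in> I" for i
  proof -
    have "\<not> 0 < measure M (D i)"
      using none that by blast
    then have "measure M (D i) = 0"
      using measure_nonneg[of M "D i"] by linarith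
    then show ?thesis
      using D[OF that] by (simp add: null_sets_def emeasure_eq_measure)
  qed
  then have "A \<in> null_sets M"
    using null_sets_subset[OF null_sets_UN'[OF \<open>countable I\<close>]] cover \<open>A \<in> sets M\<close> by blast
  then show False
    using \<open>0 < measure M A\<close> by (simp add: measure_def null_sets_def)
qed

section \<open>Right-continuous and cadlag paths\<close>

lemma right_continuous_closed_of_rationals:
  fixes f :: "real \<Rightarrow> 'b::topological_space"
  assumes cont: "continuous (at_right u) f" and "u < b" and "closed C"
    and rat: "\<And>r. r \<in> \<rat> \<Longrightarrow> u < r \<Longrightarrow> r < b \<Longrightarrow> f r \<in> C"
  shows "f u \<in> C"
proof (rule Lim_in_closed_set[OF \<open>closed C\<close>])
  let ?R = "\<rat> \<inter> {u<..<b}"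
  show "(f \<longlongrightarrow> f u) (at u within ?R)"
    using cont unfolding continuous_within by (rule tendsto_within_subset) auto
  show "eventually (\<lambda>r. f r \<in> C) (at u within ?R)"
    using rat by (auto simp: eventually_at_filter)
  have "u islimpt ?R"
  proof (rule islimptI)
    fix U assume "u \<in> U" "open U"
    then obtain e where "e > 0" "ball u e \<subseteq> U"
      using open_contains_ball by blast
    moreover obtain r where "r \<in> \<rat>" "u < r" "r < min (u + e) b"
      using Rats_dense_in_real[of u "min (u + e) b"] \<open>e > 0\<close> \<open>u < b\<close> by auto
    ultimately show "\<exists>r\<in>?R. r \<in> U \<and> r \<noteq> u"
      by (intro bexI[of _ r]) (auto simp: dist_real_def)
  qed
  then show "at u within ?R \<noteq> bot"
    using trivial_limit_within by blast
qed

lemma eventually_norm_le_of_tendsto: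
  fixes f :: "'a \<Rightarrow> 'b::real_normed_vector"
  assumes "(f \<longlongrightarrow> l) F"
  shows "eventually (\<lambda>x. norm (f x) \<le> norm l + 1) F"
  using order_tendstoD(2)[OF tendsto_norm[OF assms], of "norm l + 1"]
  by (auto elim: eventually_mono)

lemma bounded_image_of_locally_bounded:
  fixes f :: "'a::topological_space \<Rightarrow> 'b::real_normed_vector"
  assumes "compact S"
    and local: "\<And>x. x \<in> S \<Longrightarrow> \<exists>B. eventually (\<lambda>y. norm (f y) \<le> B) (at x within S)"
  shows "bounded (f ` S)"
proof -
  have "\<exists>U B. open U \<and> x \<in> U \<and> (\<forall>y\<in>U \<inter> S. norm (f y) \<le> B)" if x: "x \<in> S" for x
  proof -
    obtain B U where "open U" "x \<in> U" and B: "\<forall>y\<in>U. y \<noteq> x \<longrightarrow> y \<in> S \<longrightarrow> norm (f y) \<le> B"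
      using local[OF x] unfolding eventually_at_topological by blast
    then show ?thesis
      by (intro exI[of _ U] exI[of _ "max B (norm (f x))"]) force
  qed
  then obtain U B where U: "\<And>x. x \<in> S \<Longrightarrow> open (U x) \<and> x \<in> U x"
    and B: "\<And>x y. x \<in> S \<Longrightarrow> y \<in> U x \<inter> S \<Longrightarrow> norm (f y) \<le> B x"
    by metis
  obtain K where "K \<subseteq> S" "finite K" and cover: "S \<subseteq> (\<Union>x\<in>K. U x)"
    using compactE_image[OF \<open>compact S\<close>, of S U] U by blast
  have "norm (f y) \<le> Max (B ` K)" if "y \<in> S" for y
  proof -
    obtain x where "x \<in> K" "y \<in> U x"
      using cover \<open>y \<in> S\<close> by blast
    then have "norm (f y) \<le> B x"
      using B \<open>K \<subseteq> S\<close> \<open>y \<in> S\<close> by blast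
    also have "\<dots> \<le> Max (B ` K)"
      using \<open>x \<in> K\<close> \<open>finite K\<close> by simp
    finally show ?thesis .
  qed
  then show ?thesis
    unfolding bounded_iff by blast
qed

lemma cadlag_path_locally_bounded:
  fixes f :: "real \<Rightarrow> 'b::real_normed_vector"
  assumes rc: "\<forall>t\<in>{0..<T}. continuous (at_right t) f"
    and ll: "\<forall>t\<in>{0<..T}. \<exists>l. (f \<longlongrightarrow> l) (at_left t)"
    and t: "t \<in> {0..T}"
  shows "\<exists>B. eventually (\<lambda>u. norm (f u) \<le> B) (at t within {0..T})"
proof -
  obtain B1 where B1: "eventually (\<lambda>u. norm (f u) \<le> B1) (at t within {0..<t})"
  proof (cases "t = 0")
    case False
    then obtain l where "(f \<longlongrightarrow> l) (at_left t)"
      using ll t by force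
    then have "eventually (\<lambda>u. norm (f u) \<le> norm l + 1) (at t within {0..<t})"
      by (rule filter_leD[OF at_le, rotated, OF eventually_norm_le_of_tendsto]) auto
    then show ?thesis by (rule that)
  qed (auto intro: that)
  obtain B2 where B2: "eventually (\<lambda>u. norm (f u) \<le> B2) (at t within {t<..T})"
  proof (cases "t = T")
    case False
    then have "(f \<longlongrightarrow> f t) (at_right t)"
      using rc t by (simp add: continuous_within)
    then have "eventually (\<lambda>u. norm (f u) \<le> norm (f t) + 1) (at t within {t<..T})"
      by (rule filter_leD[OF at_le, rotated, OF eventually_norm_le_of_tendsto]) auto
    then show ?thesis by (rule that)
  qed (auto intro: that)
  have "at t within {0..T} = sup (at t within {0..<t}) (at t within {t<..T})"
    unfolding at_within_union[symmetric] using t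
    by (intro at_within_nhd[of _ UNIV]) auto
  then show ?thesis
    using B1 B2 by (intro exI[of _ "max B1 B2"]) (auto simp: eventually_sup elim: eventually_mono)
qed

lemma cadlag_path_bounded:
  fixes f :: "real \<Rightarrow> 'b::real_normed_vector"
  assumes "\<forall>t\<in>{0..<T}. continuous (at_right t) f"
    and "\<forall>t\<in>{0<..T}. \<exists>l. (f \<longlongrightarrow> l) (at_left t)"
  shows "bounded (f ` {0..T})"
  using assms by (intro bounded_image_of_locally_bounded cadlag_path_locally_bounded) auto

lemma cadlag_on_pathD:
  assumes "cadlag_on M T S" "\<omega> \<in> space M"
  shows "\<forall>t\<in>{0..<T}. continuous (at_right t) (\<lambda>u. S u \<omega>)" "bounded ((\<lambda>u. S u \<omega>) ` {0..T})"
  using assms unfolding cadlag_on_def by (auto intro: cadlag_path_bounded)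

lemma bdd_above_norm_diff_of_bounded:
  fixes f :: "'a \<Rightarrow> 'b::real_normed_vector"
  assumes "bounded (f ` S)"
  shows "bdd_above ((\<lambda>u. norm (f u - c)) ` S)"
proof -
  obtain B where B: "\<forall>u\<in>S. norm (f u) \<le> B"
    using assms unfolding bounded_iff by blast
  have "norm (f u - c) \<le> B + norm c" if "u \<in> S" for u
    using B that norm_triangle_ineq4[of "f u" c] by fastforce
  then show ?thesis
    by (rule bdd_aboveI2)
qed

lemma cSUP_Icc_eq_cSUP_rationals:
  fixes g :: "real \<Rightarrow> real"
  assumes rc: "\<forall>u\<in>{t..<T}. continuous (at_right u) g"
    and bdd: "bdd_above (g ` {t..T})" and "0 \<le> t" "t \<le> T"
  shows "(SUP u\<in>{t..T}. g u) = (SUP r\<in>insert T (\<rat> \<inter> {0..T}). if t \<le> r then g r else g t)"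
    (is "?sup = (SUP r\<in>?I. ?h r)")
proof (rule antisym)
  have "?h ` ?I \<subseteq> g ` {t..T}"
    using \<open>0 \<le> t\<close> \<open>t \<le> T\<close> by auto
  then have bdd_h: "bdd_above (?h ` ?I)"
    by (rule bdd_above_mono[OF bdd])
  show "?sup \<le> (SUP r\<in>?I. ?h r)"
  proof (rule cSUP_least)
    fix u assume u: "u \<in> {t..T}"
    show "g u \<le> (SUP r\<in>?I. ?h r)"
    proof (cases "u = T")
      case False
      have "g u \<in> {..(SUP r\<in>?I. ?h r)}"
      proof (rule right_continuous_closed_of_rationals[of u g T])
        fix r assume "r \<in> \<rat>" "u < r" "r < T"
        then show "g r \<in> {..(SUP r\<in>?I. ?h r)}"
          using u \<open>0 \<le> t\<close> cSUP_upper[OF _ bdd_h, of r] by auto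
      qed (use rc u False in auto)
      then show ?thesis by simp
    qed (use u cSUP_upper[OF _ bdd_h, of T] in auto)
  qed (use \<open>t \<le> T\<close> in auto)
  show "(SUP r\<in>?I. ?h r) \<le> ?sup"
  proof (rule cSUP_least)
    fix r assume "r \<in> ?I"
    then show "?h r \<le> ?sup"
      using \<open>t \<le> T\<close> by (auto intro!: cSUP_upper[OF _ bdd])
  qed auto
qed

lemma exists_rational_small_oscillation:
  fixes f :: "real \<Rightarrow> 'b::real_normed_vector"
  assumes "0 \<le> t" "t \<le> T" and rc: "t < T \<Longrightarrow> continuous (at_right t) f" and "0 < \<epsilon>"
  shows "\<exists>q\<in>insert T (\<rat> \<inter> {0..T}). t \<le> q \<and> (\<forall>r\<in>{t..q}. norm (f r - f q) \<le> \<epsilon>)"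
proof (cases "t = T")
  case False
  then have "eventually (\<lambda>u. dist (f u) (f t) < \<epsilon> / 2) (at_right t)"
    using rc \<open>t \<le> T\<close> \<open>0 < \<epsilon>\<close> unfolding continuous_within by (intro tendstoD) auto
  then obtain b where "t < b" and b: "\<And>u. t < u \<Longrightarrow> u < b \<Longrightarrow> dist (f u) (f t) < \<epsilon> / 2"
    unfolding eventually_at_right_field by blast
  obtain q where q: "q \<in> \<rat>" "t < q" "q < min b T"
    using Rats_dense_in_real[of t "min b T"] \<open>t < b\<close> \<open>t \<le> T\<close> False by auto
  have close: "dist (f r) (f t) < \<epsilon> / 2" if "r \<in> {t..q}" for r
    using that q b[of r] \<open>0 < \<epsilon>\<close> by (cases "r = t") auto
  have "norm (f r - f q) \<le> \<epsilon>" if "r \<in> {t..q}" for r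
    using close[OF that] close[of q] q dist_triangle2[of "f r" "f q" "f t"]
    by (simp add: dist_norm)
  then show ?thesis
    using q \<open>0 \<le> t\<close> by (intro bexI[of _ q]) auto
qed (use \<open>0 < \<epsilon>\<close> in auto)

lemma cSUP_oscillation_le_of_rational_bound:
  fixes f :: "real \<Rightarrow> 'b::real_normed_vector"
  assumes rc: "\<forall>u\<in>{t..<q}. continuous (at_right u) f"
    and bdd: "bdd_above ((\<lambda>u. norm (f u - f q)) ` {q..T})"
    and "t \<le> q" "q \<le> T"
    and rat: "\<forall>r\<in>\<rat> \<inter> {t..q}. norm (f r - f q) \<le> \<epsilon>"
    and sup: "(SUP u\<in>{q..T}. norm (f u - f q)) < \<epsilon>"
  shows "(SUP u\<in>{t..T}. norm (f u - f t)) \<le> 2 * \<epsilon>"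
proof -
  have after_q: "norm (f u - f q) < \<epsilon>" if "u \<in> {q..T}" for u
    using cSUP_upper[OF that bdd] sup by linarith
  have before_q: "norm (f u - f q) \<le> \<epsilon>" if "u \<in> {t..<q}" for u
  proof -
    have "f u \<in> cball (f q) \<epsilon>"
    proof (rule right_continuous_closed_of_rationals[of u f q])
      fix r assume "r \<in> \<rat>" "u < r" "r < q"
      then show "f r \<in> cball (f q) \<epsilon>"
        using rat that by (auto simp: dist_norm norm_minus_commute)
    qed (use rc that in auto)
    then show ?thesis by (simp add: dist_norm norm_minus_commute)
  qed
  have near_q: "norm (f u - f q) \<le> \<epsilon>" if "u \<in> {t..T}" for u
    using that before_q after_q[of u] by (cases "u < q") auto
  have "norm (f u - f t) \<le> 2 * \<epsilon>" if "u \<in> {t..T}" for u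
    using near_q[OF that] near_q[of t] that norm_triangle_ineq4[of "f u - f q" "f t - f q"]
    by auto
  then show ?thesis
    using \<open>t \<le> q\<close> \<open>q \<le> T\<close> by (intro cSUP_least) auto
qed

section \<open>Measurability of the oscillation event\<close>

lemma dyadic_ceiling_ge: "x \<le> real_of_int \<lceil>x * 2 ^ n\<rceil> / 2 ^ n"
  using le_of_int_ceiling[of "x * 2 ^ n"] by (simp add: field_simps)

lemma tendsto_dyadic_ceiling: "(\<lambda>n. real_of_int \<lceil>x * 2 ^ n\<rceil> / 2 ^ n) \<longlonglongrightarrow> x"
proof (rule tendsto_sandwich[where f="\<lambda>n. x" and h="\<lambda>n. x + (1 / 2) ^ n"])
  have "real_of_int \<lceil>x * 2 ^ n\<rceil> / 2 ^ n \<le> x + (1 / 2) ^ n" for n :: nat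
    using of_int_ceiling_le_add_one[of "x * 2 ^ n"] by (simp add: field_simps power_divide)
  then show "eventually (\<lambda>n. real_of_int \<lceil>x * 2 ^ n\<rceil> / 2 ^ n \<le> x + (1 / 2) ^ n) sequentially"
    by simp
  show "(\<lambda>n. x + (1 / 2) ^ n) \<longlonglongrightarrow> x"
    using tendsto_add[OF tendsto_const LIMSEQ_power_zero[of "1 / 2 :: real"]] by simp
qed (auto simp: dyadic_ceiling_ge)

lemma borel_measurable_process_at_random_time:
  fixes S :: "real \<Rightarrow> 'a \<Rightarrow> 'b::metric_space"
  assumes "0 \<le> T" and S: "\<forall>t\<in>{0..T}. S t \<in> borel_measurable M"
    and rc: "\<forall>\<omega>\<in>space M. \<forall>t\<in>{0..<T}. continuous (at_right t) (\<lambda>u. S u \<omega>)"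
    and [measurable]: "\<tau> \<in> borel_measurable M" and \<tau>: "\<forall>\<omega>\<in>space M. \<tau> \<omega> \<in> {0..T}"
  shows "(\<lambda>\<omega>. S (\<tau> \<omega>) \<omega>) \<in> borel_measurable M"
proof (rule borel_measurable_LIMSEQ_metric)
  define grid where "grid n k = max 0 (min T (real_of_int k / 2 ^ n))" for n :: nat and k :: int
  define \<tau>n where "\<tau>n n \<omega> = grid n \<lceil>\<tau> \<omega> * 2 ^ n\<rceil>" for n \<omega>
  show "(\<lambda>\<omega>. S (\<tau>n n \<omega>) \<omega>) \<in> borel_measurable M" for n
  proof -
    have ceiling: "(\<lambda>\<omega>. \<lceil>\<tau> \<omega> * 2 ^ n\<rceil>) \<in> M \<rightarrow>\<^sub>M count_space UNIV"
      by measurable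
    have "(\<lambda>\<omega>. S (grid n k) \<omega>) \<in> borel_measurable M" for k
      using S \<open>0 \<le> T\<close> by (simp add: grid_def)
    then show ?thesis
      unfolding \<tau>n_def by (rule measurable_compose_countable[OF _ ceiling])
  qed
  show "(\<lambda>n. S (\<tau>n n \<omega>) \<omega>) \<longlonglongrightarrow> S (\<tau> \<omega>) \<omega>" if \<omega>: "\<omega> \<in> space M" for \<omega>
  proof (cases "\<tau> \<omega> = T")
    case True
    then have "\<tau>n n \<omega> = T" for n
      using dyadic_ceiling_ge[of T n] \<open>0 \<le> T\<close> by (simp add: \<tau>n_def grid_def)
    then show ?thesis using True by simp
  next
    case False
    have ge: "\<tau> \<omega> \<le> \<tau>n n \<omega>" for n
      using dyadic_ceiling_ge[of "\<tau> \<omega>" n] \<tau>[rule_format, OF \<omega>]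
      by (simp add: \<tau>n_def grid_def le_max_iff_disj)
    have "(\<lambda>n. \<tau>n n \<omega>) \<longlonglongrightarrow> max 0 (min T (\<tau> \<omega>))"
      unfolding \<tau>n_def grid_def by (intro tendsto_intros tendsto_dyadic_ceiling)
    also have "max 0 (min T (\<tau> \<omega>)) = \<tau> \<omega>"
      using \<tau> \<omega> by auto
    finally have "(\<lambda>n. \<tau>n n \<omega>) \<longlonglongrightarrow> \<tau> \<omega>" .
    moreover have "continuous (at (\<tau> \<omega>) within {\<tau> \<omega>..}) (\<lambda>u. S u \<omega>)"
      using rc \<omega> \<tau> False by (auto simp: at_within_Ici_at_right)
    ultimately show ?thesis
      using ge by (intro continuous_within_tendsto_compose'[where f="\<lambda>u. S u \<omega>"]) auto
  qed
qed

lemma sets_small_osc_event: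
  fixes S :: "real \<Rightarrow> 'a \<Rightarrow> 'd::euclidean_space"
  assumes "0 \<le> T" and S: "\<forall>t\<in>{0..T}. S t \<in> borel_measurable M" and "cadlag_on M T S"
    and [measurable]: "\<tau> \<in> borel_measurable M" and \<tau>: "\<forall>\<omega>\<in>space M. \<tau> \<omega> \<in> {0..T}"
    and [measurable]: "\<kappa> \<in> borel_measurable M"
  shows "small_osc_event M T S \<tau> \<kappa> \<in> sets M"
proof -
  let ?I = "insert T (\<rat> \<inter> {0..T})"
  define H where "H r \<omega> = (if \<tau> \<omega> \<le> r then norm (S r \<omega> - S (\<tau> \<omega>) \<omega>) else 0)" for r \<omega>
  have rc: "\<forall>\<omega>\<in>space M. \<forall>t\<in>{0..<T}. continuous (at_right t) (\<lambda>u. S u \<omega>)"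
    using cadlag_on_pathD(1)[OF \<open>cadlag_on M T S\<close>] by blast
  note bounded = cadlag_on_pathD(2)[OF \<open>cadlag_on M T S\<close>]
  have sup_eq: "(SUP u\<in>{\<tau> \<omega>..T}. norm (S u \<omega> - S (\<tau> \<omega>) \<omega>)) = (SUP r\<in>?I. H r \<omega>)"
    if "\<omega> \<in> space M" for \<omega>
    unfolding H_def using that \<tau> rc
    by (subst cSUP_Icc_eq_cSUP_rationals)
      (auto intro!: bdd_above_norm_diff_of_bounded bounded_subset[OF bounded] continuous_intros)
  have [measurable]: "(\<lambda>\<omega>. S (\<tau> \<omega>) \<omega>) \<in> borel_measurable M"
    by (rule borel_measurable_process_at_random_time[OF \<open>0 \<le> T\<close> S rc \<open>\<tau> \<in> borel_measurable M\<close> \<tau>])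
  have H_measurable: "H r \<in> borel_measurable M" if "r \<in> ?I" for r
  proof -
    have [measurable]: "S r \<in> borel_measurable M"
      using that \<open>0 \<le> T\<close> S by auto
    show ?thesis unfolding H_def by measurable
  qed
  have bdd_H: "bdd_above ((\<lambda>r. H r \<omega>) ` ?I)" if "\<omega> \<in> space M" for \<omega>
  proof -
    have "bdd_above (insert 0 ((\<lambda>u. norm (S u \<omega> - S (\<tau> \<omega>) \<omega>)) ` {0..T}))"
      using bdd_above_norm_diff_of_bounded[OF bounded[OF that]] by simp
    then show ?thesis
      by (rule bdd_above_mono) (use \<open>0 \<le> T\<close> in \<open>auto simp: H_def\<close>)
  qed
  have "(\<lambda>\<omega>. SUP r\<in>?I. H r \<omega>) \<in> borel_measurable M"
    using H_measurable bdd_H by (intro borel_measurable_cSUP) (auto intro: countable_Int1 countable_rat)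
  then have "{\<omega>\<in>space M. (SUP r\<in>?I. H r \<omega>) < \<kappa> \<omega>} \<in> sets M"
    by measurable
  moreover have "small_osc_event M T S \<tau> \<kappa> = {\<omega>\<in>space M. (SUP r\<in>?I. H r \<omega>) < \<kappa> \<omega>}"
    unfolding small_osc_event_def using sup_eq by auto
  ultimately show ?thesis by simp
qed

section \<open>Filtrations and stopping times\<close>

lemma subalgebra_filtration:
  assumes "usual_filtration M F T" "t \<in> {0..T}"
  shows "subalgebra M (F t)"
  using assms unfolding usual_filtration_def by auto

lemma space_filtration:
  assumes "usual_filtration M F T" "t \<in> {0..T}"
  shows "space (F t) = space M"
  using subalgebra_filtration[OF assms] by (simp add: subalgebra_def)

lemma sets_filtration_mono:
  assumes "usual_filtration M F T" "s \<in> {0..T}" "t \<in> {0..T}" "s \<le> t"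
  shows "sets (F s) \<subseteq> sets (F t)"
  using assms unfolding usual_filtration_def by auto

lemma measurable_filtration_mono:
  assumes "usual_filtration M F T" "s \<in> {0..T}" "t \<in> {0..T}" "s \<le> t"
    and "X \<in> measurable (F s) N"
  shows "X \<in> measurable (F t) N"
proof (rule measurable_from_subalg[OF _ \<open>X \<in> measurable (F s) N\<close>])
  show "subalgebra (F t) (F s)"
    using sets_filtration_mono[OF assms(1-4)] space_filtration[OF assms(1)] assms(2,3)
    by (simp add: subalgebra_def)
qed

lemma borel_measurable_adapted:
  assumes "usual_filtration M F T" "adapted_on F T S" "t \<in> {0..T}"
  shows "S t \<in> borel_measurable M"
  using assms measurable_from_subalg[OF subalgebra_filtration[OF assms(1,3)]]
  unfolding adapted_on_def by blast

lemma stopping_time_on_const: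
  assumes "usual_filtration M F T" "t \<in> {0..T}"
  shows "stopping_time_on M F T (\<lambda>_. t)"
  unfolding stopping_time_on_def
proof (intro conjI ballI)
  fix s assume "s \<in> {0..T}"
  then show "{\<omega>\<in>space M. t \<le> s} \<in> sets (F s)"
    using sets.top[of "F s"] space_filtration[OF assms(1)] by (cases "t \<le> s") auto
qed (use assms in auto)

lemma borel_measurable_stopping_time:
  assumes uf: "usual_filtration M F T" and "stopping_time_on M F T \<tau>"
  shows "\<tau> \<in> borel_measurable M"
  unfolding borel_measurable_iff_le
proof
  fix a
  have \<tau>: "\<forall>\<omega>\<in>space M. \<tau> \<omega> \<in> {0..T}"
    and event: "\<forall>t\<in>{0..T}. {\<omega>\<in>space M. \<tau> \<omega> \<le> t} \<in> sets (F t)"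
    using \<open>stopping_time_on M F T \<tau>\<close> unfolding stopping_time_on_def by blast+
  consider "a < 0" | "T \<le> a" | "a \<in> {0..T}" by fastforce
  then show "{\<omega>\<in>space M. \<tau> \<omega> \<le> a} \<in> sets M"
  proof cases
    case 1
    then have "{\<omega>\<in>space M. \<tau> \<omega> \<le> a} = {}" using \<tau> by force
    then show ?thesis by (metis sets.empty_sets)
  next
    case 2
    then have "{\<omega>\<in>space M. \<tau> \<omega> \<le> a} = space M" using \<tau> by force
    then show ?thesis by (metis sets.top)
  next
    case 3
    then show ?thesis
      using event subalgebra_filtration[OF uf 3] by (auto simp: subalgebra_def)
  qed
qed

lemma sets_stopped_sigma:
  assumes "stopping_time_on M F T \<tau>"
  shows "sets (stopped_sigma M F T \<tau>) =
    {A \<in> sets M. \<forall>t\<in>{0..T}. A \<inter> {\<omega>\<in>space M. \<tau> \<omega> \<le> t} \<in> sets (F t)}"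
    (is "_ = ?C")
proof -
  let ?E = "\<lambda>t. {\<omega>\<in>space M. \<tau> \<omega> \<le> t}"
  have E: "?E t \<in> sets (F t)" if "t \<in> {0..T}" for t
    using assms that unfolding stopping_time_on_def by blast
  have "sigma_algebra (space M) ?C"
    unfolding sigma_algebra_iff2
  proof (intro conjI allI ballI impI)
    show "?C \<subseteq> Pow (space M)"
      using sets.sets_into_space by blast
    show "space M - A \<in> ?C" if "A \<in> ?C" for A
    proof -
      have "(space M - A) \<inter> ?E t = ?E t - A \<inter> ?E t" for t
        by blast
      then show ?thesis
        using that E by auto
    qed
    show "(\<Union>i. A i) \<in> ?C" if "range A \<subseteq> ?C" for A :: "nat \<Rightarrow> 'a set"
    proof -
      have "(\<Union>i. A i) \<inter> ?E t = (\<Union>i. A i \<inter> ?E t)" for t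
        by blast
      moreover have "(\<Union>i. A i \<inter> ?E t) \<in> sets (F t)" if "t \<in> {0..T}" for t
        using \<open>range A \<subseteq> ?C\<close> that by (intro sets.countable_UN) blast
      moreover have "(\<Union>i. A i) \<in> sets M"
        using \<open>range A \<subseteq> ?C\<close> by (intro sets.countable_UN) blast
      ultimately show ?thesis
        by simp
    qed
  qed auto
  then show ?thesis
    unfolding stopped_sigma_def by (rule sigma_algebra.sets_measure_of_eq)
qed

lemma space_stopped_sigma: "space (stopped_sigma M F T \<tau>) = space M"
  unfolding stopped_sigma_def using sets.sets_into_space by (intro space_measure_of) blast

lemma subalgebra_stopped_sigma:
  assumes "stopping_time_on M F T \<tau>"
  shows "subalgebra M (stopped_sigma M F T \<tau>)"
  unfolding subalgebra_def sets_stopped_sigma[OF assms] space_stopped_sigma by blast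

lemma sets_stopped_sigma_const:
  assumes uf: "usual_filtration M F T" and "t \<in> {0..T}"
  shows "sets (stopped_sigma M F T (\<lambda>_. t)) = sets (F t)"
proof -
  have "A \<inter> {\<omega>\<in>space M. t \<le> s} \<in> sets (F s)" if "A \<in> sets (F t)" "s \<in> {0..T}" for A s
  proof (cases "t \<le> s")
    case True
    then show ?thesis
      using that sets.sets_into_space[OF that(1)] sets_filtration_mono[OF uf \<open>t \<in> {0..T}\<close>]
        space_filtration[OF uf \<open>t \<in> {0..T}\<close>] by (auto simp: Int_absorb2)
  qed simp
  moreover have "A \<in> sets (F t)" if "A \<in> sets M" "A \<inter> {\<omega>\<in>space M. t \<le> t} \<in> sets (F t)" for A
    using that sets.sets_into_space[OF that(1)] by (simp add: Int_absorb2)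
  moreover have "sets (F t) \<subseteq> sets M"
    using subalgebra_filtration[OF assms] by (simp add: subalgebra_def)
  ultimately show ?thesis
    unfolding sets_stopped_sigma[OF stopping_time_on_const[OF assms]]
    using \<open>t \<in> {0..T}\<close> by blast
qed

lemma measurable_stopped_sigma_restrict:
  assumes uf: "usual_filtration M F T" and st: "stopping_time_on M F T \<tau>" and q: "q \<in> {0..T}"
    and X: "X \<in> measurable (stopped_sigma M F T \<tau>) N" and "c \<in> space N"
  shows "(\<lambda>\<omega>. if \<tau> \<omega> \<le> q then X \<omega> else c) \<in> measurable (F q) N"
proof (rule measurableI)
  let ?E = "{\<omega>\<in>space M. \<tau> \<omega> \<le> q}"
  have space: "space (F q) = space M"
    by (rule space_filtration[OF uf q])
  show "(if \<tau> \<omega> \<le> q then X \<omega> else c) \<in> space N" if "\<omega> \<in> space (F q)" for \<omega>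
    using that measurable_space[OF X] \<open>c \<in> space N\<close> by (auto simp: space space_stopped_sigma)
  fix B assume "B \<in> sets N"
  have "X -` B \<inter> space M \<in> sets (stopped_sigma M F T \<tau>)"
    using measurable_sets[OF X \<open>B \<in> sets N\<close>] by (simp add: space_stopped_sigma)
  then have "X -` B \<inter> space M \<inter> ?E \<in> sets (F q)"
    using q unfolding sets_stopped_sigma[OF st] by blast
  moreover have "?E \<in> sets (F q)"
    using st q unfolding stopping_time_on_def by blast
  moreover have "(\<lambda>\<omega>. if \<tau> \<omega> \<le> q then X \<omega> else c) -` B \<inter> space (F q) =
      X -` B \<inter> space M \<inter> ?E \<union> (if c \<in> B then space (F q) - ?E else {})"
    by (auto simp: space split: if_splits)
  ultimately show "(\<lambda>\<omega>. if \<tau> \<omega> \<le> q then X \<omega> else c) -` B \<inter> space (F q) \<in> sets (F q)"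
    by auto
qed

lemma sets_small_osc_event_stopping_time:
  fixes S :: "real \<Rightarrow> 'a \<Rightarrow> 'd::euclidean_space"
  assumes uf: "usual_filtration M F T" and cad: "cadlag_on M T S" and ad: "adapted_on F T S"
    and st: "stopping_time_on M F T \<tau>" and \<kappa>: "\<kappa> \<in> borel_measurable M"
  shows "small_osc_event M T S \<tau> \<kappa> \<in> sets M"
proof (cases "space M = {}")
  case True
  then show ?thesis
    by (simp add: small_osc_event_def)
next
  case False
  have \<tau>: "\<forall>\<omega>\<in>space M. \<tau> \<omega> \<in> {0..T}"
    using st unfolding stopping_time_on_def by blast
  with False have "0 \<le> T"
    by fastforce
  show ?thesis
    using borel_measurable_adapted[OF uf ad] \<open>0 \<le> T\<close>
    by (intro sets_small_osc_event cad borel_measurable_stopping_time[OF uf st] \<tau> \<kappa>) auto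
qed

section \<open>Stickiness at stopping times from stickiness at fixed times\<close>

(* Only rational times enter, so that the event is F q-measurable; right-continuity
   recovers the path at all times. *)
definition rational_oscillation_event ::
    "'a measure \<Rightarrow> (real \<Rightarrow> 'a \<Rightarrow> 'd::real_normed_vector) \<Rightarrow> ('a \<Rightarrow> real) \<Rightarrow> real \<Rightarrow> ('a \<Rightarrow> real) \<Rightarrow> 'a set"
  where "rational_oscillation_event M S \<tau> q \<epsilon> = {\<omega>\<in>space M. \<tau> \<omega> \<le> q \<and>
    (\<forall>r\<in>\<rat> \<inter> {0..q}. \<tau> \<omega> \<le> r \<longrightarrow> norm (S r \<omega> - S q \<omega>) \<le> \<epsilon> \<omega>)}"

lemma sets_rational_oscillation_event:
  fixes S :: "real \<Rightarrow> 'a \<Rightarrow> 'd::euclidean_space"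
  assumes uf: "usual_filtration M F T" and ad: "adapted_on F T S"
    and st: "stopping_time_on M F T \<tau>" and q: "q \<in> {0..T}"
    and \<epsilon>: "\<epsilon> \<in> borel_measurable (stopped_sigma M F T \<tau>)"
  shows "rational_oscillation_event M S \<tau> q \<epsilon> \<in> sets (F q)"
proof -
  define \<epsilon>q where "\<epsilon>q \<omega> = (if \<tau> \<omega> \<le> q then \<epsilon> \<omega> else 0)" for \<omega>
  have space: "space (F q) = space M"
    by (rule space_filtration[OF uf q])
  have [measurable]: "\<epsilon>q \<in> borel_measurable (F q)" "S q \<in> borel_measurable (F q)"
    unfolding \<epsilon>q_def using measurable_stopped_sigma_restrict[OF uf st q \<epsilon>] ad q
    by (auto simp: adapted_on_def)
  have before: "{\<omega>\<in>space M. \<tau> \<omega> \<le> r} \<in> sets (F q)" if "r \<in> {0..q}" for r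
    using st sets_filtration_mono[OF uf _ q, of r] that q unfolding stopping_time_on_def by auto
  have "{\<omega>\<in>space (F q). \<tau> \<omega> \<le> r \<longrightarrow> norm (S r \<omega> - S q \<omega>) \<le> \<epsilon>q \<omega>} \<in> sets (F q)"
    if r: "r \<in> \<rat> \<inter> {0..q}" for r
  proof -
    have "S r \<in> borel_measurable (F r)"
      using r q ad by (auto simp: adapted_on_def)
    then have [measurable]: "S r \<in> borel_measurable (F q)"
      using r q by (intro measurable_filtration_mono[OF uf _ q]) auto
    have "{\<omega>\<in>space (F q). norm (S r \<omega> - S q \<omega>) \<le> \<epsilon>q \<omega>} \<in> sets (F q)"
      by measurable
    moreover have "{\<omega>\<in>space (F q). \<tau> \<omega> \<le> r \<longrightarrow> norm (S r \<omega> - S q \<omega>) \<le> \<epsilon>q \<omega>} =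
        (space (F q) - {\<omega>\<in>space M. \<tau> \<omega> \<le> r}) \<union> {\<omega>\<in>space (F q). norm (S r \<omega> - S q \<omega>) \<le> \<epsilon>q \<omega>}"
      by (auto simp: space)
    ultimately show ?thesis
      using before r by auto
  qed
  then have "{\<omega>\<in>space (F q). \<forall>r\<in>\<rat> \<inter> {0..q}. \<tau> \<omega> \<le> r \<longrightarrow> norm (S r \<omega> - S q \<omega>) \<le> \<epsilon>q \<omega>} \<in> sets (F q)"
    by (intro sets.sets_Collect_countable_All') (auto intro: countable_rat)
  then have "{\<omega>\<in>space M. \<tau> \<omega> \<le> q} \<inter>
      {\<omega>\<in>space (F q). \<forall>r\<in>\<rat> \<inter> {0..q}. \<tau> \<omega> \<le> r \<longrightarrow> norm (S r \<omega> - S q \<omega>) \<le> \<epsilon>q \<omega>} \<in> sets (F q)"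
    using before[of q] q by auto
  moreover have "{\<omega>\<in>space M. \<tau> \<omega> \<le> q} \<inter>
      {\<omega>\<in>space (F q). \<forall>r\<in>\<rat> \<inter> {0..q}. \<tau> \<omega> \<le> r \<longrightarrow> norm (S r \<omega> - S q \<omega>) \<le> \<epsilon>q \<omega>} =
      rational_oscillation_event M S \<tau> q \<epsilon>"
    by (auto simp: rational_oscillation_event_def \<epsilon>q_def space)
  ultimately show ?thesis
    by simp
qed

lemma rational_oscillation_event_cover:
  assumes cad: "cadlag_on M T S" and \<tau>: "\<forall>\<omega>\<in>space M. \<tau> \<omega> \<in> {0..T}"
    and \<epsilon>: "\<forall>\<omega>\<in>space M. 0 < \<epsilon> \<omega>"
  shows "space M \<subseteq> (\<Union>q\<in>insert T (\<rat> \<inter> {0..T}). rational_oscillation_event M S \<tau> q \<epsilon>)"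
proof
  fix \<omega> assume \<omega>: "\<omega> \<in> space M"
  have "0 \<le> \<tau> \<omega>" "\<tau> \<omega> \<le> T" "0 < \<epsilon> \<omega>"
    using \<tau> \<epsilon> \<omega> by auto
  moreover have "\<tau> \<omega> < T \<Longrightarrow> continuous (at_right (\<tau> \<omega>)) (\<lambda>u. S u \<omega>)"
    using cadlag_on_pathD(1)[OF cad \<omega>] \<open>0 \<le> \<tau> \<omega>\<close> by auto
  ultimately obtain q where "q \<in> insert T (\<rat> \<inter> {0..T})" "\<tau> \<omega> \<le> q"
      "\<forall>r\<in>{\<tau> \<omega>..q}. norm (S r \<omega> - S q \<omega>) \<le> \<epsilon> \<omega>"
    using exists_rational_small_oscillation[of "\<tau> \<omega>" T "\<lambda>u. S u \<omega>" "\<epsilon> \<omega>"] by blast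
  then show "\<omega> \<in> (\<Union>q\<in>insert T (\<rat> \<inter> {0..T}). rational_oscillation_event M S \<tau> q \<epsilon>)"
    using \<omega> unfolding rational_oscillation_event_def by auto
qed

lemma rational_oscillation_event_Int_subset:
  fixes S :: "real \<Rightarrow> 'a \<Rightarrow> 'd::euclidean_space"
  assumes cad: "cadlag_on M T S" and \<tau>: "\<forall>\<omega>\<in>space M. \<tau> \<omega> \<in> {0..T}" and "q \<le> T"
    and c: "\<And>\<omega>. \<omega> \<in> space M \<Longrightarrow> \<tau> \<omega> \<le> q \<Longrightarrow> c \<omega> = \<epsilon> \<omega>"
    and \<kappa>: "\<And>\<omega>. \<omega> \<in> space M \<Longrightarrow> 2 * \<epsilon> \<omega> < \<kappa> \<omega>"
  shows "rational_oscillation_event M S \<tau> q \<epsilon> \<inter> small_osc_event M T S (\<lambda>_. q) c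
    \<subseteq> small_osc_event M T S \<tau> \<kappa>"
proof
  fix \<omega> assume "\<omega> \<in> rational_oscillation_event M S \<tau> q \<epsilon> \<inter> small_osc_event M T S (\<lambda>_. q) c"
  then have \<omega>: "\<omega> \<in> space M" "\<tau> \<omega> \<le> q"
    and rat: "\<forall>r\<in>\<rat> \<inter> {\<tau> \<omega>..q}. norm (S r \<omega> - S q \<omega>) \<le> \<epsilon> \<omega>"
    and sup: "(SUP u\<in>{q..T}. norm (S u \<omega> - S q \<omega>)) < \<epsilon> \<omega>"
    using \<tau> c unfolding rational_oscillation_event_def small_osc_event_def by auto
  have "{q..T} \<subseteq> {0..T}"
    using \<tau> \<omega> by auto
  then have "bounded ((\<lambda>u. S u \<omega>) ` {q..T})"
    by (rule bounded_subset[OF cadlag_on_pathD(2)[OF cad \<omega>(1)] image_mono])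
  then have "bdd_above ((\<lambda>u. norm (S u \<omega> - S q \<omega>)) ` {q..T})"
    by (rule bdd_above_norm_diff_of_bounded)
  then have "(SUP u\<in>{\<tau> \<omega>..T}. norm (S u \<omega> - S (\<tau> \<omega>) \<omega>)) \<le> 2 * \<epsilon> \<omega>"
    using cadlag_on_pathD(1)[OF cad \<omega>(1)] \<tau> \<omega> \<open>q \<le> T\<close> rat sup
    by (intro cSUP_oscillation_le_of_rational_bound) auto
  then show "\<omega> \<in> small_osc_event M T S \<tau> \<kappa>"
    using \<kappa> \<omega> unfolding small_osc_event_def by fastforce
qed

definition sticky_at_fixed_times ::
    "'a measure \<Rightarrow> (real \<Rightarrow> 'a measure) \<Rightarrow> real \<Rightarrow> (real \<Rightarrow> 'a \<Rightarrow> 'd::euclidean_space) \<Rightarrow> bool"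
  where "sticky_at_fixed_times M F T S \<longleftrightarrow>
    (\<forall>t\<in>{0..T}. \<forall>\<kappa>. \<kappa> \<in> borel_measurable (F t) \<and> (\<forall>\<omega>\<in>space M. 0 < \<kappa> \<omega>) \<longrightarrow>
       (AE \<omega> in M. 0 < condP M (F t) (small_osc_event M T S (\<lambda>_. t) \<kappa>) \<omega>))"

lemma sticky_imp_sticky_at_fixed_times:
  assumes uf: "usual_filtration M F T" and "sticky M F T S"
  shows "sticky_at_fixed_times M F T S"
  unfolding sticky_at_fixed_times_def
proof (intro ballI allI impI, elim conjE)
  fix t and \<kappa> :: "'a \<Rightarrow> real"
  assume t: "t \<in> {0..T}" and \<kappa>: "\<kappa> \<in> borel_measurable (F t)" and \<kappa>_pos: "\<forall>\<omega>\<in>space M. 0 < \<kappa> \<omega>"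
  let ?G = "stopped_sigma M F T (\<lambda>_. t)"
  have sets: "sets ?G = sets (F t)"
    by (rule sets_stopped_sigma_const[OF uf t])
  have space: "space ?G = space (F t)"
    using space_stopped_sigma space_filtration[OF uf t] by simp
  have "\<kappa> \<in> borel_measurable ?G"
    using \<kappa> by (simp add: measurable_cong_sets[OF sets refl])
  then have "AE \<omega> in M. 0 < condP M ?G (small_osc_event M T S (\<lambda>_. t) \<kappa>) \<omega>"
    using \<open>sticky M F T S\<close> stopping_time_on_const[OF uf t] \<kappa>_pos unfolding sticky_def by blast
  then show "AE \<omega> in M. 0 < condP M (F t) (small_osc_event M T S (\<lambda>_. t) \<kappa>) \<omega>"
    by (simp add: condP_cong_sets[OF space sets])
qed

lemma sets_stopped_Int_rational_oscillation_event:
  fixes S :: "real \<Rightarrow> 'a \<Rightarrow> 'd::euclidean_space"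
  assumes uf: "usual_filtration M F T" and ad: "adapted_on F T S"
    and st: "stopping_time_on M F T \<tau>" and q: "q \<in> {0..T}"
    and \<epsilon>: "\<epsilon> \<in> borel_measurable (stopped_sigma M F T \<tau>)"
    and A: "A \<in> sets (stopped_sigma M F T \<tau>)"
  shows "A \<inter> rational_oscillation_event M S \<tau> q \<epsilon> \<in> sets (F q)"
proof -
  have "A \<inter> {\<omega>\<in>space M. \<tau> \<omega> \<le> q} \<in> sets (F q)"
    using A q unfolding sets_stopped_sigma[OF st] by blast
  moreover have "A \<inter> rational_oscillation_event M S \<tau> q \<epsilon> =
      A \<inter> {\<omega>\<in>space M. \<tau> \<omega> \<le> q} \<inter> rational_oscillation_event M S \<tau> q \<epsilon>"
    by (auto simp: rational_oscillation_event_def)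
  ultimately show ?thesis
    using sets_rational_oscillation_event[OF uf ad st q \<epsilon>] by simp
qed

lemma exists_measure_stopped_Int_rational_oscillation_event_pos:
  fixes S :: "real \<Rightarrow> 'a \<Rightarrow> 'd::euclidean_space"
  assumes "prob_space M" and uf: "usual_filtration M F T"
    and cad: "cadlag_on M T S" and ad: "adapted_on F T S" and st: "stopping_time_on M F T \<tau>"
    and \<epsilon>: "\<epsilon> \<in> borel_measurable (stopped_sigma M F T \<tau>)" and \<epsilon>_pos: "\<forall>\<omega>\<in>space M. 0 < \<epsilon> \<omega>"
    and A: "A \<in> sets (stopped_sigma M F T \<tau>)" and "0 < measure M A"
  shows "\<exists>q\<in>{0..T}. 0 < measure M (A \<inter> rational_oscillation_event M S \<tau> q \<epsilon>)"
proof -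
  interpret prob_space M by fact
  let ?I = "insert T (\<rat> \<inter> {0..T})"
  have \<tau>: "\<forall>\<omega>\<in>space M. \<tau> \<omega> \<in> {0..T}"
    using st unfolding stopping_time_on_def by blast
  have "A \<in> sets M"
    using A subalgebra_stopped_sigma[OF st] by (auto simp: subalgebra_def)
  then have cover: "A \<subseteq> (\<Union>q\<in>?I. A \<inter> rational_oscillation_event M S \<tau> q \<epsilon>)"
    using rational_oscillation_event_cover[OF cad \<tau> \<epsilon>_pos] sets.sets_into_space by blast
  have I: "?I \<subseteq> {0..T}"
    using \<tau> not_empty by fastforce
  have "countable ?I"
    by (auto intro: countable_rat)
  moreover have "A \<inter> rational_oscillation_event M S \<tau> q \<epsilon> \<in> sets M" if "q \<in> ?I" for q
    using sets_stopped_Int_rational_oscillation_event[OF uf ad st _ \<epsilon> A, of q]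
      subalgebra_filtration[OF uf, of q] I that by (auto simp: subalgebra_def)
  ultimately show ?thesis
    using measure_pos_of_countable_cover[OF _ \<open>A \<in> sets M\<close> \<open>0 < measure M A\<close> cover]
      I by blast
qed

lemma stopped_event_meets_small_osc_event:
  fixes S :: "real \<Rightarrow> 'a \<Rightarrow> 'd::euclidean_space"
  assumes P: "prob_space M" and uf: "usual_filtration M F T"
    and cad: "cadlag_on M T S" and ad: "adapted_on F T S"
    and fixed: "sticky_at_fixed_times M F T S"
    and st: "stopping_time_on M F T \<tau>" and \<kappa>: "\<kappa> \<in> borel_measurable (stopped_sigma M F T \<tau>)"
    and \<kappa>_pos: "\<forall>\<omega>\<in>space M. 0 < \<kappa> \<omega>"
    and A: "A \<in> sets (stopped_sigma M F T \<tau>)" and "0 < measure M A"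
  shows "0 < measure M (A \<inter> small_osc_event M T S \<tau> \<kappa>)"
proof -
  interpret prob_space M by fact
  let ?\<epsilon> = "\<lambda>\<omega>. \<kappa> \<omega> / 4"
  let ?D = "\<lambda>q. A \<inter> rational_oscillation_event M S \<tau> q ?\<epsilon>"
  have \<epsilon>: "?\<epsilon> \<in> borel_measurable (stopped_sigma M F T \<tau>)"
    using \<kappa> by (intro borel_measurable_divide) auto
  obtain q where q: "q \<in> {0..T}" and "0 < measure M (?D q)"
    using exists_measure_stopped_Int_rational_oscillation_event_pos[OF P uf cad ad st \<epsilon> _ A]
      \<kappa>_pos \<open>0 < measure M A\<close> by auto
  have D: "?D q \<in> sets (F q)"
    by (rule sets_stopped_Int_rational_oscillation_event[OF uf ad st q \<epsilon> A])
  define \<kappa>q where "\<kappa>q \<omega> = (if \<tau> \<omega> \<le> q then ?\<epsilon> \<omega> else 1)" for \<omega>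
  have "\<kappa>q \<in> borel_measurable (F q)"
    unfolding \<kappa>q_def by (rule measurable_stopped_sigma_restrict[OF uf st q \<epsilon>]) simp
  moreover have "\<forall>\<omega>\<in>space M. 0 < \<kappa>q \<omega>"
    using \<kappa>_pos by (simp add: \<kappa>q_def)
  ultimately have "AE \<omega> in M. 0 < condP M (F q) (small_osc_event M T S (\<lambda>_. q) \<kappa>q) \<omega>"
    using fixed q unfolding sticky_at_fixed_times_def by blast
  moreover have "small_osc_event M T S (\<lambda>_. q) \<kappa>q \<in> sets M"
    using measurable_from_subalg[OF subalgebra_filtration[OF uf q] \<open>\<kappa>q \<in> _\<close>]
    by (intro sets_small_osc_event_stopping_time[OF uf cad ad stopping_time_on_const[OF uf q]])
  ultimately have "0 < measure M (?D q \<inter> small_osc_event M T S (\<lambda>_. q) \<kappa>q)"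
    using AE_condP_pos_iff[OF P subalgebra_filtration[OF uf q]] D \<open>0 < measure M (?D q)\<close>
    by blast
  also have "\<dots> \<le> measure M (A \<inter> small_osc_event M T S \<tau> \<kappa>)"
  proof (rule finite_measure_mono)
    have \<tau>: "\<forall>\<omega>\<in>space M. \<tau> \<omega> \<in> {0..T}"
      using st unfolding stopping_time_on_def by blast
    then show "?D q \<inter> small_osc_event M T S (\<lambda>_. q) \<kappa>q \<subseteq> A \<inter> small_osc_event M T S \<tau> \<kappa>"
      using rational_oscillation_event_Int_subset[OF cad \<tau>, of q \<kappa>q ?\<epsilon> \<kappa>] q \<kappa>_pos
      by (auto simp: \<kappa>q_def)
    show "A \<inter> small_osc_event M T S \<tau> \<kappa> \<in> sets M"
      using A subalgebra_stopped_sigma[OF st] measurable_from_subalg[OF subalgebra_stopped_sigma[OF st] \<kappa>]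
        sets_small_osc_event_stopping_time[OF uf cad ad st] by (auto simp: subalgebra_def)
  qed
  finally show ?thesis .
qed

lemma sticky_at_fixed_times_imp_sticky:
  fixes S :: "real \<Rightarrow> 'a \<Rightarrow> 'd::euclidean_space"
  assumes P: "prob_space M" and uf: "usual_filtration M F T"
    and cad: "cadlag_on M T S" and ad: "adapted_on F T S"
    and "sticky_at_fixed_times M F T S"
  shows "sticky M F T S"
  unfolding sticky_def
proof (intro allI impI, elim conjE)
  fix \<tau> \<kappa> :: "'a \<Rightarrow> real"
  assume st: "stopping_time_on M F T \<tau>" and \<kappa>: "\<kappa> \<in> borel_measurable (stopped_sigma M F T \<tau>)"
    and \<kappa>_pos: "\<forall>\<omega>\<in>space M. 0 < \<kappa> \<omega>"
  have B: "small_osc_event M T S \<tau> \<kappa> \<in> sets M"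
    using measurable_from_subalg[OF subalgebra_stopped_sigma[OF st] \<kappa>]
    by (rule sets_small_osc_event_stopping_time[OF uf cad ad st])
  show "AE \<omega> in M. 0 < condP M (stopped_sigma M F T \<tau>) (small_osc_event M T S \<tau> \<kappa>) \<omega>"
    unfolding AE_condP_pos_iff[OF P subalgebra_stopped_sigma[OF st] B]
    by (intro ballI impI stopped_event_meets_small_osc_event[OF assms st \<kappa> \<kappa>_pos])
qed

theorem lemma2p1:
  fixes M :: "'a measure" and F :: "real \<Rightarrow> 'a measure" and T :: real
    and S :: "real \<Rightarrow> 'a \<Rightarrow> 'd::euclidean_space"
  assumes "prob_space M"
    and "usual_filtration M F T"
    and "cadlag_on M T S"
    and "adapted_on F T S"
  shows "sticky M F T S \<longleftrightarrow>
    (\<forall>t\<in>{0..T}. \<forall>\<kappa>. \<kappa> \<in> borel_measurable (F t) \<and> (\<forall>\<omega>\<in>space M. 0 < \<kappa> \<omega>) \<longrightarrow>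
       (AE \<omega> in M. 0 < condP M (F t) (small_osc_event M T S (\<lambda>_. t) \<kappa>) \<omega>))"
proof -
  have "sticky M F T S \<longleftrightarrow> sticky_at_fixed_times M F T S"
    using sticky_imp_sticky_at_fixed_times[OF assms(2)] sticky_at_fixed_times_imp_sticky[OF assms]
    by blast
  then show ?thesis
    unfolding sticky_at_fixed_times_def .
qed

end
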